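(* Let $Q$, $V$, $W$ be independent exponential random variables with rate parameters $\lambda_q,\lambda_v,\lambda_w>0$. Let $\beta_b>0$, $\mathcal{J}_b\ge 0$, $\mathcal{G}_b\ge 0$, $\mathcal{D}_b>0$, $\tilde P_T>0$, $d_{Rb}>0$, $d_{RD}>0$, $\tau>0$, $\sigma_b^2>0$, $\bar P_R>0$, $I_{\text{ITC}}>0$, and let $\psi_j>0$ satisfy $\psi_j<\beta_b/\mathcal{J}_b$ (i.e. $\beta_b-\mathcal{J}_b\psi_j>0$). For $l\in\{\bar P_R,\ I_{\text{ITC}}d_{RD}^{\tau}\}$ define $$\mathcal{S}(l)=\frac{\mathcal{D}_b\tilde P_T\psi_j}{l(\beta_b-\mathcal{J}_b\psi_j)},\qquad \mathcal{O}(l)=\frac{d_{Rb}^{\tau}\sigma_b^2\psi_j}{l(\beta_b-\mathcal{J}_b\psi_j)},$$ and set $\mathcal{S}_\Theta=\mathcal{S}(\bar P_R)$, $\mathcal{O}_\Theta=\mathcal{O}(\bar P_R)$, $\mathcal{S}_\Phi=\mathcal{S}(I_{\text{ITC}}d_{RD}^{\tau})$, $\mathcal{O}_\Phi=\mathcal{O}(I_{\text{ITC}}d_{RD}^{\tau})$, $\mathcal{T}=\frac{\mathcal{G}_b\psi_j}{\beta_b-\mathcal{J}_b\psi_j}$, $\Lambda_R=\frac{I_{\text{ITC}}d_{RD}^{\tau}}{\bar P_R}$, $\mu_R=\lambda_w+\lambda_q\Lambda_R\mathcal{S}_\Phi$ and $\xi_R=\frac{\mathcal{O}_\Phi}{\mathcal{S}_\Phi}+\frac{\lambda_v}{\lambda_q\mathcal{S}_\Phi}$.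 Define $$F_{\gamma_{b,j}}(\psi_j)=\Pr\big[Q<W\mathcal{S}_\Theta+\mathcal{O}_\Theta+\mathcal{T},\ V<\Lambda_R\big]+\Pr\big[Q<WV\mathcal{S}_\Phi+V\mathcal{O}_\Phi+\mathcal{T},\ V>\Lambda_R\big].$$ Then $$F_{\gamma_{b,j}}(\psi_j)=1-\frac{\lambda_w e^{-\lambda_q(\mathcal{O}_\Theta+\mathcal{T})}}{\lambda_w+\lambda_q\mathcal{S}_\Theta}\left(1-e^{-\lambda_v\Lambda_R}\right)+\frac{\lambda_v\lambda_w\,\mathrm{Ei}[-\mu_R\xi_R]}{\lambda_q\mathcal{S}_\Phi}\,e^{-\Lambda_R(\lambda_v+\lambda_q\mathcal{O}_\Phi)-\lambda_q\mathcal{T}+\mu_R\xi_R},$$ where $\mathrm{Ei}$ is the exponential integral function.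
   Context: Interpretation: in an underlay cognitive-radio NOMA relay network, $Q=|h_{Rb}|^2$ (estimated relay–user-$b$ channel gain), $V=|\bar h_{RD}|^2$ (relay–primary-destination channel gain), $W=|\bar h_{Tb}|^2$ (primary-transmitter–user-$b$ channel gain); the relay transmit power is $P_R=\min(\bar P_R, I_{\text{ITC}}d_{RD}^{\tau}/V)$, and $F_{\gamma_{b,j}}(\psi_j)$ is the CDF at threshold $\psi_j$ of the signal-to-interference-distortion-noise ratio with which user $b$ decodes message $x_j$. Here $\beta_b$ is a power-allocation factor, $\mathcal{J}_b$ aggregates residual NOMA/SIC-error interference and hardware distortion, $\mathcal{G}_b$ accounts for channel estimation error, $\mathcal{D}_b\tilde P_T$ scales the primary interference, $I_{\text{ITC}}$ is the interference temperature constraint, $d_{(\cdot)}$ are distances and $\tau$ the path-loss exponent. $\mathrm{Ei}(x)=-\int_{-x}^{\infty}e^{-t}t^{-1}\,dt$. *)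

theory Defs
  imports "HOL-Probability.Probability"
begin

text \<open>Exponential integral for negative arguments:
  Ei x = - integral over (-x, infinity) of exp(-t)/t  (x < 0; Lebesgue integral).\<close>
definition Ei :: "real \<Rightarrow> real" where
  "Ei x = - (LBINT t:{-x<..}. exp (- t) / t)"

end

theory Submission
  imports Defs
begin

text \<open>Given \<open>V = v\<close>, both events have the form \<open>Q < a W + b\<close> with \<open>a, b \<ge> 0\<close> depending on \<open>v\<close>.
  Integrating the CDF \<open>1 - exp (- lq q)\<close> of \<open>Q\<close> against the density of \<open>W\<close> is a Laplace
  transform of the exponential law, so \<open>P[Q < a W + b] = 1 - lw exp (- lq b) / (lw + lq a)\<close>.
  On \<open>V < \<Lambda>\<close> the coefficients are constant and the remaining integral over \<open>v\<close> is elementary.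
  On \<open>V > \<Lambda>\<close> they are linear in \<open>v\<close>, and the integral over \<open>v\<close> becomes the exponential
  integral after the affine substitution \<open>t = (lv + lq O\<^sub>\<Phi>) (v + lw / (lq S\<^sub>\<Phi>))\<close>.\<close>

lemma nn_integral_eq_has_bochner_integral:
  assumes "has_bochner_integral M f x" and "AE y in M. 0 \<le> f y"
  shows "(\<integral>\<^sup>+y. ennreal (f y) \<partial>M) = ennreal x"
  using assms by (metis has_bochner_integral_iff nn_integral_eq_integral)

lemma has_bochner_integral_exponential_density:
  assumes "0 < l"
  shows "has_bochner_integral lborel (exponential_density l) 1"
  using nn_integral_erlang_ith_moment[OF assms, of 0 0] assms
  by (intro has_bochner_integral_nn_integral) (auto simp: exponential_density_nonneg)

lemma has_bochner_integral_exponential_density_atMost: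
  assumes "0 < l" and "0 \<le> h"
  shows "has_bochner_integral lborel (\<lambda>x. indicator {..h} x * exponential_density l x) (1 - exp (- l * h))"
proof (rule has_bochner_integral_nn_integral)
  show "(\<integral>\<^sup>+x. ennreal (indicator {..h} x * exponential_density l x) \<partial>lborel) = ennreal (1 - exp (- l * h))"
    using nn_integral_erlang_density[OF assms(1), of 0 h] assms(2)
    by (simp add: erlang_CDF_0 indicator_mult_ennreal mult.commute)
qed (use assms in \<open>auto simp: exponential_density_nonneg\<close>)

lemma has_bochner_integral_exponential_density_lessThan:
  assumes "0 < l" and "0 \<le> h"
  shows "has_bochner_integral lborel (\<lambda>x. indicator {..<h} x * exponential_density l x) (1 - exp (- l * h))"
proof -
  have "AE x in lborel. indicator {..h} x * exponential_density l x = indicator {..<h} x * exponential_density l x"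
    using AE_lborel_singleton[of h] by eventually_elim (auto simp: indicator_def)
  then show ?thesis
    using has_bochner_integral_exponential_density_atMost[OF assms]
    by (subst (asm) has_bochner_integral_cong_AE) auto
qed

lemma has_bochner_integral_exponential_density_greaterThan:
  assumes "0 < l" and "0 \<le> h"
  shows "has_bochner_integral lborel (\<lambda>x. indicator {h<..} x * exponential_density l x) (exp (- l * h))"
proof -
  have "indicator {h<..} x * exponential_density l x
      = exponential_density l x - indicator {..h} x * exponential_density l x" for x
    by (simp add: indicator_def)
  then show ?thesis
    using has_bochner_integral_diff[OF has_bochner_integral_exponential_density[OF assms(1)]
        has_bochner_integral_exponential_density_atMost[OF assms]] by simp
qed

lemma has_bochner_integral_exponential_density_mult_exp:
  assumes "0 < l" and "0 < l + s"
  shows "has_bochner_integral lborel (\<lambda>x. exponential_density l x * exp (- s * x)) (l / (l + s))"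
proof -
  have "(\<lambda>x. exponential_density l x * exp (- s * x)) = (\<lambda>x. l / (l + s) * exponential_density (l + s) x)"
    using assms by (simp add: fun_eq_iff exponential_density_def exp_add[symmetric] field_simps)
  then show ?thesis
    using has_bochner_integral_mult_right[OF has_bochner_integral_exponential_density[OF assms(2)], of "l / (l + s)"]
    by simp
qed

lemma has_bochner_integral_exponential_cdf_affine:
  assumes "0 < lw" and "0 \<le> lq" and "0 \<le> a"
  shows "has_bochner_integral lborel (\<lambda>w. exponential_density lw w * (1 - exp (- lq * (a * w + b))))
           (1 - lw * exp (- lq * b) / (lw + lq * a))"
proof -
  have "0 < lw + lq * a"
    using assms by (simp add: add_pos_nonneg)
  then have "has_bochner_integral lborel
      (\<lambda>w. exponential_density lw w - exp (- lq * b) * (exponential_density lw w * exp (- (lq * a) * w)))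
      (1 - exp (- lq * b) * (lw / (lw + lq * a)))"
    using assms by (intro has_bochner_integral_diff has_bochner_integral_mult_right
        has_bochner_integral_exponential_density has_bochner_integral_exponential_density_mult_exp)
  moreover have "exponential_density lw w - exp (- lq * b) * (exponential_density lw w * exp (- (lq * a) * w))
      = exponential_density lw w * (1 - exp (- lq * (a * w + b)))" for w
    by (simp add: algebra_simps exp_add[symmetric])
  ultimately show ?thesis
    by (simp add: mult_ac)
qed

lemma exp_affine_ratio_bounds:
  fixes lw lq a b :: real
  assumes "0 < lw" and "0 \<le> lq" and "0 \<le> a" and "0 \<le> b"
  shows "0 \<le> lw * exp (- lq * b) / (lw + lq * a) \<and> lw * exp (- lq * b) / (lw + lq * a) \<le> 1"
proof -
  have "lw * exp (- lq * b) \<le> lw"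
    using assms by (simp add: mult_left_le)
  also have "\<dots> \<le> lw + lq * a"
    using assms by simp
  finally show ?thesis
    using assms by (simp add: add_pos_nonneg)
qed

lemma nn_integral_exponential_less_affine:
  assumes lq: "0 < lq" and lw: "0 < lw" and a: "0 \<le> a" and b: "0 \<le> b"
  shows "(\<integral>\<^sup>+w. \<integral>\<^sup>+q. ennreal (exponential_density lw w) * ennreal (exponential_density lq q)
            * indicator {..<a * w + b} q \<partial>lborel \<partial>lborel)
       = ennreal (1 - lw * exp (- lq * b) / (lw + lq * a))"
proof -
  let ?e = exponential_density
  have inner: "(\<integral>\<^sup>+q. ennreal (?e lw w) * ennreal (?e lq q) * indicator {..<a * w + b} q \<partial>lborel)
      = ennreal (?e lw w * (1 - exp (- lq * (a * w + b))))" for w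
  proof (cases "0 \<le> w")
    case True
    then have h: "0 \<le> a * w + b"
      using a b by simp
    have "(\<integral>\<^sup>+q. ennreal (?e lw w) * ennreal (?e lq q) * indicator {..<a * w + b} q \<partial>lborel)
        = ennreal (?e lw w) * (\<integral>\<^sup>+q. indicator {..<a * w + b} q * ennreal (?e lq q) \<partial>lborel)"
      by (subst nn_integral_cmult[symmetric]) (auto intro!: nn_integral_cong simp: mult_ac)
    also have "\<dots> = ennreal (?e lw w) * ennreal (1 - exp (- lq * (a * w + b)))"
      using has_bochner_integral_exponential_density_lessThan[OF lq h] lq
      by (simp add: indicator_mult_ennreal nn_integral_eq_has_bochner_integral exponential_density_nonneg)
    finally show ?thesis
      using lw lq h by (simp add: ennreal_mult'[symmetric] exponential_density_nonneg)
  qed (simp add: exponential_density_def)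
  have "0 \<le> ?e lw w * (1 - exp (- lq * (a * w + b)))" for w
    using lq lw a b by (cases "0 \<le> w") (simp_all add: exponential_density_def)
  then show ?thesis
    unfolding inner using has_bochner_integral_exponential_cdf_affine[OF lw less_imp_le[OF lq] a, of b]
    by (intro nn_integral_eq_has_bochner_integral) simp_all
qed

text \<open>No integrability hypothesis is needed: the affine substitution rule for Bochner integrals is
  unconditional, both sides being \<open>0\<close> when the integrals do not exist.\<close>

lemma set_integral_exp_div_affine:
  fixes a c d L :: real
  assumes "0 < a" and "c \<noteq> 0"
  shows "(LBINT v:{L<..}. exp (- a * v) / (d + c * v)) = - Ei (- (a * (L + d / c))) * exp (a * d / c) / c"
proof -
  define x0 where "x0 = a * (L + d / c)"
  define K where "K = c * exp (- (a * d / c)) / a"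
  have substitution: "indicator {x0<..} (a * d / c + a * v) *\<^sub>R (exp (- (a * d / c + a * v)) / (a * d / c + a * v))
      = K * (indicator {L<..} v *\<^sub>R (exp (- a * v) / (d + c * v)))" for v
  proof -
    have "x0 < a * d / c + a * v \<longleftrightarrow> L < v"
      using assms unfolding x0_def by (simp add: algebra_simps)
    moreover have "exp (- (a * d / c + a * v)) / (a * d / c + a * v) = K * (exp (- a * v) / (d + c * v))"
      using assms unfolding K_def by (simp add: exp_add[symmetric] field_simps)
    ultimately show ?thesis
      by (simp add: indicator_def)
  qed
  have "(LBINT t:{x0<..}. exp (- t) / t)
      = \<bar>a\<bar> *\<^sub>R (\<integral>v. indicator {x0<..} (a * d / c + a * v) *\<^sub>R (exp (- (a * d / c + a * v)) / (a * d / c + a * v)) \<partial>lborel)"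
    unfolding set_lebesgue_integral_def using assms by (intro lborel_integral_real_affine) simp
  also have "\<dots> = a * K * (LBINT v:{L<..}. exp (- a * v) / (d + c * v))"
    unfolding substitution set_lebesgue_integral_def integral_mult_right_zero using assms by simp
  finally have "Ei (- x0) = - a * K * (LBINT v:{L<..}. exp (- a * v) / (d + c * v))"
    by (simp add: Ei_def)
  then show ?thesis
    using assms unfolding x0_def K_def by (simp add: exp_minus field_simps)
qed

text \<open>\<open>indep_var\<close> forces both variables into one type; composing with measurable maps
  into different spaces gives independence of, e.g., a pair \<open>(V, W)\<close> and a scalar \<open>Q\<close>.\<close>

lemma (in prob_space) indep_var_distr_compose:
  assumes indep: "indep_var S X T Y" and f: "f \<in> S \<rightarrow>\<^sub>M S'" and g: "g \<in> T \<rightarrow>\<^sub>M T'"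
  shows "distr M S' (\<lambda>\<omega>. f (X \<omega>)) \<Otimes>\<^sub>M distr M T' (\<lambda>\<omega>. g (Y \<omega>))
       = distr M (S' \<Otimes>\<^sub>M T') (\<lambda>\<omega>. (f (X \<omega>), g (Y \<omega>)))"
proof -
  have X: "random_variable S X" and Y: "random_variable T Y"
    and XY: "distr M S X \<Otimes>\<^sub>M distr M T Y = distr M (S \<Otimes>\<^sub>M T) (\<lambda>\<omega>. (X \<omega>, Y \<omega>))"
    using indep by (simp_all add: indep_var_distribution_eq)
  have "sigma_finite_measure (distr (distr M T Y) T' g)"
    using Y g by (simp add: distr_distr prob_space_imp_sigma_finite prob_space_distr)
  then have "distr (distr M S X) S' f \<Otimes>\<^sub>M distr (distr M T Y) T' g
      = distr (distr M S X \<Otimes>\<^sub>M distr M T Y) (S' \<Otimes>\<^sub>M T') (\<lambda>(x, y). (f x, g y))"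
    using f g by (intro pair_measure_distr) simp_all
  then show ?thesis
    using X Y f g unfolding XY by (simp add: distr_distr comp_def)
qed

lemma (in prob_space) distributed_joint_indep3:
  fixes Q V W :: "'a \<Rightarrow> real"
  assumes indep: "indep_vars (\<lambda>_. borel) (\<lambda>i::nat. [Q, V, W] ! i) {0, 1, 2}"
    and Q: "distributed M lborel Q fq" and V: "distributed M lborel V fv" and W: "distributed M lborel W fw"
  shows "distributed M ((lborel \<Otimes>\<^sub>M lborel) \<Otimes>\<^sub>M lborel) (\<lambda>x. ((V x, W x), Q x))
           (\<lambda>((v, w), q). fv v * fw w * fq q)"
proof -
  let ?restrict = "\<lambda>(A :: nat set) \<omega>. restrict (\<lambda>i. ([Q, V, W] ! i) \<omega>) A"
  have "indep_var (PiM {1} (\<lambda>_. borel)) (?restrict {1}) (PiM {2} (\<lambda>_. borel)) (?restrict {2})"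
    by (rule indep_var_restrict[OF indep]) auto
  from indep_var_distr_compose[OF this, of "\<lambda>x. x 1" lborel "\<lambda>x. x 2" lborel]
  have VW_indep: "distr M lborel V \<Otimes>\<^sub>M distr M lborel W = distr M (lborel \<Otimes>\<^sub>M lborel) (\<lambda>x. (V x, W x))"
    by (simp add: measurable_lborel2)
  have VW: "distributed M (lborel \<Otimes>\<^sub>M lborel) (\<lambda>x. (V x, W x)) (\<lambda>(v, w). fv v * fw w)"
    by (rule distributed_joint_indep'[OF _ _ V W VW_indep]) (auto intro: lborel.sigma_finite_measure_axioms)
  have "indep_var (PiM {1, 2} (\<lambda>_. borel)) (?restrict {1, 2}) (PiM {0} (\<lambda>_. borel)) (?restrict {0})"
    by (rule indep_var_restrict[OF indep]) auto
  from indep_var_distr_compose[OF this, of "\<lambda>x. (x 1, x 2)" "lborel \<Otimes>\<^sub>M lborel" "\<lambda>x. x 0" lborel]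
  have VWQ_indep: "distr M (lborel \<Otimes>\<^sub>M lborel) (\<lambda>x. (V x, W x)) \<Otimes>\<^sub>M distr M lborel Q
      = distr M ((lborel \<Otimes>\<^sub>M lborel) \<Otimes>\<^sub>M lborel) (\<lambda>x. ((V x, W x), Q x))"
    by (simp add: measurable_lborel2 measurable_pair_iff)
  have "distributed M ((lborel \<Otimes>\<^sub>M lborel) \<Otimes>\<^sub>M lborel) (\<lambda>x. ((V x, W x), Q x))
      (\<lambda>(x, q). (\<lambda>(v, w). fv v * fw w) x * fq q)"
    by (rule distributed_joint_indep'[OF _ _ VW Q VWQ_indep])
       (auto intro: lborel.sigma_finite_measure_axioms sigma_finite_pair_measure)
  then show ?thesis
    by (simp add: case_prod_beta')
qed

lemma measure_distributed_iterated_nn_integral: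
  fixes X :: "'a \<Rightarrow> (real \<times> real) \<times> real"
  assumes "distributed M ((lborel \<Otimes>\<^sub>M lborel) \<Otimes>\<^sub>M lborel) X f"
    and A: "A \<in> sets ((lborel \<Otimes>\<^sub>M lborel) \<Otimes>\<^sub>M lborel)"
  shows "measure M {\<omega> \<in> space M. X \<omega> \<in> A}
       = enn2real (\<integral>\<^sup>+v. \<integral>\<^sup>+w. \<integral>\<^sup>+q. f ((v, w), q) * indicator A ((v, w), q) \<partial>lborel \<partial>lborel \<partial>lborel)"
proof -
  let ?N = "(lborel \<Otimes>\<^sub>M lborel) \<Otimes>\<^sub>M lborel :: ((real \<times> real) \<times> real) measure"
  have X: "X \<in> M \<rightarrow>\<^sub>M ?N" and f: "f \<in> borel_measurable ?N" and distr: "distr M ?N X = density ?N f"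
    using assms(1) by (auto simp: distributed_def)
  have fA: "(\<lambda>x. f x * indicator A x) \<in> borel_measurable ?N"
    using f A by measurable
  have "measure M {\<omega> \<in> space M. X \<omega> \<in> A} = measure (density ?N f) A"
    using measure_distr[OF X A] unfolding distr by (simp add: vimage_def Int_def conj_commute)
  also have "\<dots> = enn2real (\<integral>\<^sup>+x. f x * indicator A x \<partial>?N)"
    using emeasure_density[OF f A] by (simp add: measure_def)
  also have "(\<integral>\<^sup>+x. f x * indicator A x \<partial>?N) = (\<integral>\<^sup>+y. \<integral>\<^sup>+q. f (y, q) * indicator A (y, q) \<partial>lborel \<partial>(lborel \<Otimes>\<^sub>M lborel))"
    using fA by (intro lborel.nn_integral_fst[symmetric]) simp
  also have "\<dots> = (\<integral>\<^sup>+v. \<integral>\<^sup>+w. \<integral>\<^sup>+q. f ((v, w), q) * indicator A ((v, w), q) \<partial>lborel \<partial>lborel \<partial>lborel)"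
    using fA by (intro lborel.nn_integral_fst[symmetric, where f = "\<lambda>y. \<integral>\<^sup>+q. f (y, q) * indicator A (y, q) \<partial>lborel", simplified]
        lborel.borel_measurable_nn_integral_fst) simp
  finally show ?thesis .
qed

lemma (in prob_space) prob_exponential_less_affine:
  fixes Q V W :: "'a \<Rightarrow> real" and a b :: "real \<Rightarrow> real"
  assumes indep: "indep_vars (\<lambda>_. borel) (\<lambda>i::nat. [Q, V, W] ! i) {0, 1, 2}"
    and Q: "distributed M lborel Q (exponential_density lq)"
    and V: "distributed M lborel V (exponential_density lv)"
    and W: "distributed M lborel W (exponential_density lw)"
    and lq: "0 < lq" and lv: "0 < lv" and lw: "0 < lw"
    and [measurable]: "a \<in> borel_measurable borel" "b \<in> borel_measurable borel" "B \<in> sets borel"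
    and nonneg: "\<And>v. v \<in> B \<Longrightarrow> 0 \<le> a v \<and> 0 \<le> b v"
  shows "prob {\<omega> \<in> space M. Q \<omega> < a (V \<omega>) * W \<omega> + b (V \<omega>) \<and> V \<omega> \<in> B}
       = (\<integral>v. indicator B v * exponential_density lv v * (1 - lw * exp (- lq * b v) / (lw + lq * a v)) \<partial>lborel)"
proof -
  let ?e = exponential_density
  let ?N = "(lborel \<Otimes>\<^sub>M lborel) \<Otimes>\<^sub>M lborel :: ((real \<times> real) \<times> real) measure"
  define A where "A = {((v, w), q). q < a v * w + b v \<and> v \<in> B}"
  define \<kappa> where "\<kappa> v = lw * exp (- lq * b v) / (lw + lq * a v)" for v
  have "A = {x \<in> space ?N. snd x < a (fst (fst x)) * snd (fst x) + b (fst (fst x)) \<and> fst (fst x) \<in> B}"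
    by (auto simp: A_def space_pair_measure)
  also have "\<dots> \<in> sets ?N"
    by measurable
  finally have A_sets: "A \<in> sets ?N" .
  have \<kappa>_le_1: "\<kappa> v \<le> 1" if "v \<in> B" for v
    using exp_affine_ratio_bounds[OF lw less_imp_le[OF lq]] nonneg[OF that] by (simp add: \<kappa>_def)
  have conditional: "(\<integral>\<^sup>+w. \<integral>\<^sup>+q. ennreal (?e lv v) * ennreal (?e lw w) * ennreal (?e lq q)
        * indicator A ((v, w), q) \<partial>lborel \<partial>lborel)
      = ennreal (indicator B v * ?e lv v * (1 - \<kappa> v))" for v
  proof (cases "v \<in> B")
    case True
    have "(\<integral>\<^sup>+w. \<integral>\<^sup>+q. ennreal (?e lv v) * ennreal (?e lw w) * ennreal (?e lq q)
        * indicator A ((v, w), q) \<partial>lborel \<partial>lborel)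
      = ennreal (?e lv v) * (\<integral>\<^sup>+w. \<integral>\<^sup>+q. ennreal (?e lw w) * ennreal (?e lq q)
        * indicator {..<a v * w + b v} q \<partial>lborel \<partial>lborel)"
      using True by (simp add: A_def indicator_def mult_ac flip: nn_integral_cmult)
    also have "\<dots> = ennreal (?e lv v) * ennreal (1 - \<kappa> v)"
      using nonneg[OF True] by (simp add: nn_integral_exponential_less_affine lq lw \<kappa>_def)
    finally show ?thesis
      using True \<kappa>_le_1[OF True] lv by (simp add: ennreal_mult exponential_density_nonneg)
  qed (simp add: A_def)
  have "prob {\<omega> \<in> space M. Q \<omega> < a (V \<omega>) * W \<omega> + b (V \<omega>) \<and> V \<omega> \<in> B}
      = prob {\<omega> \<in> space M. ((V \<omega>, W \<omega>), Q \<omega>) \<in> A}"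
    by (simp add: A_def mult.commute)
  also have "\<dots> = enn2real (\<integral>\<^sup>+v. \<integral>\<^sup>+w. \<integral>\<^sup>+q. ennreal (?e lv v) * ennreal (?e lw w) * ennreal (?e lq q)
      * indicator A ((v, w), q) \<partial>lborel \<partial>lborel \<partial>lborel)"
    using measure_distributed_iterated_nn_integral[OF distributed_joint_indep3[OF indep Q V W] A_sets]
    by simp
  also have "\<dots> = enn2real (\<integral>\<^sup>+v. ennreal (indicator B v * ?e lv v * (1 - \<kappa> v)) \<partial>lborel)"
    by (simp only: conditional)
  also have "\<dots> = (\<integral>v. indicator B v * ?e lv v * (1 - \<kappa> v) \<partial>lborel)"
    using \<kappa>_le_1 lv by (intro integral_eq_nn_integral[symmetric])
      (auto simp: \<kappa>_def indicator_def exponential_density_nonneg)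
  finally show ?thesis
    unfolding \<kappa>_def .
qed

lemma (in prob_space) prob_exponential_less_below:
  fixes Q V W :: "'a \<Rightarrow> real"
  assumes indep: "indep_vars (\<lambda>_. borel) (\<lambda>i::nat. [Q, V, W] ! i) {0, 1, 2}"
    and Q: "distributed M lborel Q (exponential_density lq)"
    and V: "distributed M lborel V (exponential_density lv)"
    and W: "distributed M lborel W (exponential_density lw)"
    and lq: "0 < lq" and lv: "0 < lv" and lw: "0 < lw"
    and "0 \<le> S" "0 \<le> N" "0 \<le> T" "0 \<le> L"
  shows "prob {\<omega> \<in> space M. Q \<omega> < W \<omega> * S + N + T \<and> V \<omega> < L}
       = (1 - lw * exp (- lq * (N + T)) / (lw + lq * S)) * (1 - exp (- lv * L))"
proof -
  have "prob {\<omega> \<in> space M. Q \<omega> < W \<omega> * S + N + T \<and> V \<omega> < L}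
      = (\<integral>v. (1 - lw * exp (- lq * (N + T)) / (lw + lq * S)) * (indicator {..<L} v * exponential_density lv v) \<partial>lborel)"
    using prob_exponential_less_affine[OF indep Q V W lq lv lw, of "\<lambda>_. S" "\<lambda>_. N + T" "{..<L}"] assms
    by (simp add: mult.commute add.assoc mult.left_commute)
  also have "\<dots> = (1 - lw * exp (- lq * (N + T)) / (lw + lq * S)) * (1 - exp (- lv * L))"
    using has_bochner_integral_exponential_density_lessThan[OF lv \<open>0 \<le> L\<close>]
    by (simp add: has_bochner_integral_iff)
  finally show ?thesis .
qed

lemma integral_exponential_density_Ei:
  assumes lv: "0 < lv" and lq: "0 < lq" and S: "0 < S" and N: "0 \<le> N" and L: "0 \<le> L"
  shows "(\<integral>v. indicator {L<..} v * exponential_density lv v * (lw * exp (- lq * (v * N + T)) / (lw + lq * (v * S))) \<partial>lborel)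
       = - lv * lw * Ei (- ((lv + lq * N) * (L + lw / (lq * S)))) * exp ((lv + lq * N) * lw / (lq * S) - lq * T) / (lq * S)"
proof -
  let ?e = "exponential_density lv"
  define \<kappa> where "\<kappa> v = lw * exp (- lq * (v * N + T)) / (lw + lq * (v * S))" for v
  have "(\<integral>v. indicator {L<..} v * ?e v * \<kappa> v \<partial>lborel)
      = lv * lw * exp (- lq * T) * (LBINT v:{L<..}. exp (- (lv + lq * N) * v) / (lw + lq * S * v))"
  proof -
    have "?e v * \<kappa> v = lv * lw * exp (- lq * T) * (exp (- (lv + lq * N) * v) / (lw + lq * S * v))"
      if "L < v" for v
    proof -
      have "exp (- v * lv) * exp (- lq * (v * N + T)) = exp (- lq * T) * exp (- (lv + lq * N) * v)"
        by (simp flip: exp_add) (simp add: algebra_simps)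
      moreover have "?e v * \<kappa> v = lv * lw * (exp (- v * lv) * exp (- lq * (v * N + T))) / (lw + lq * (v * S))"
        using that L by (simp add: exponential_density_def \<kappa>_def)
      ultimately show ?thesis
        by (simp add: mult_ac)
    qed
    then show ?thesis
      unfolding set_lebesgue_integral_def integral_mult_right_zero[symmetric]
      by (intro Bochner_Integration.integral_cong) (simp_all add: indicator_def)
  qed
  also have "\<dots> = lv * lw * exp (- lq * T)
      * (- Ei (- ((lv + lq * N) * (L + lw / (lq * S)))) * exp ((lv + lq * N) * lw / (lq * S)) / (lq * S))"
    using lv lq N S by (subst set_integral_exp_div_affine) (auto intro: add_pos_nonneg)
  also have "\<dots> = - lv * lw * Ei (- ((lv + lq * N) * (L + lw / (lq * S))))
      * exp ((lv + lq * N) * lw / (lq * S) - lq * T) / (lq * S)"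
    by (simp add: exp_diff exp_minus field_simps)
  finally show ?thesis
    unfolding \<kappa>_def .
qed

lemma (in prob_space) prob_exponential_less_above:
  fixes Q V W :: "'a \<Rightarrow> real"
  assumes indep: "indep_vars (\<lambda>_. borel) (\<lambda>i::nat. [Q, V, W] ! i) {0, 1, 2}"
    and Q: "distributed M lborel Q (exponential_density lq)"
    and V: "distributed M lborel V (exponential_density lv)"
    and W: "distributed M lborel W (exponential_density lw)"
    and lq: "0 < lq" and lv: "0 < lv" and lw: "0 < lw"
    and S: "0 < S" and N: "0 \<le> N" and T: "0 \<le> T" and L: "0 \<le> L"
  shows "prob {\<omega> \<in> space M. Q \<omega> < W \<omega> * V \<omega> * S + V \<omega> * N + T \<and> V \<omega> > L}
       = exp (- lv * L) + lv * lw * Ei (- ((lv + lq * N) * (L + lw / (lq * S))))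
           * exp ((lv + lq * N) * lw / (lq * S) - lq * T) / (lq * S)"
proof -
  let ?e = "exponential_density lv"
  define \<kappa> where "\<kappa> v = lw * exp (- lq * (v * N + T)) / (lw + lq * (v * S))" for v
  have \<kappa>_bounds: "0 \<le> \<kappa> v \<and> \<kappa> v \<le> 1" if "L < v" for v
    using exp_affine_ratio_bounds[OF lw less_imp_le[OF lq], of "v * S" "v * N + T"] that L S N T
    by (simp add: \<kappa>_def)
  have e_int: "has_bochner_integral lborel (\<lambda>v. indicator {L<..} v * ?e v) (exp (- lv * L))"
    by (rule has_bochner_integral_exponential_density_greaterThan[OF lv L])
  have e\<kappa>_int: "integrable lborel (\<lambda>v. indicator {L<..} v * ?e v * \<kappa> v)"
  proof (rule Bochner_Integration.integrable_bound)
    show "integrable lborel (\<lambda>v. indicator {L<..} v * ?e v)"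
      using e_int by (simp add: has_bochner_integral_iff)
    show "(\<lambda>v. indicator {L<..} v * ?e v * \<kappa> v) \<in> borel_measurable lborel"
      unfolding \<kappa>_def by measurable
    have "\<bar>indicator {L<..} v * ?e v * \<kappa> v\<bar> \<le> \<bar>indicator {L<..} v * ?e v\<bar>" for v
      using \<kappa>_bounds[of v] exponential_density_nonneg[OF lv, of v]
      by (cases "L < v") (simp_all add: abs_mult mult_left_le)
    then show "AE v in lborel. norm (indicator {L<..} v * ?e v * \<kappa> v) \<le> norm (indicator {L<..} v * ?e v)"
      by simp
  qed
  have e\<kappa>: "(\<integral>v. indicator {L<..} v * ?e v * \<kappa> v \<partial>lborel)
      = - lv * lw * Ei (- ((lv + lq * N) * (L + lw / (lq * S)))) * exp ((lv + lq * N) * lw / (lq * S) - lq * T) / (lq * S)"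
    unfolding \<kappa>_def using lv lq S N L by (rule integral_exponential_density_Ei)
  have "prob {\<omega> \<in> space M. Q \<omega> < W \<omega> * V \<omega> * S + V \<omega> * N + T \<and> V \<omega> > L}
      = (\<integral>v. indicator {L<..} v * ?e v * (1 - \<kappa> v) \<partial>lborel)"
    using prob_exponential_less_affine[OF indep Q V W lq lv lw, of "\<lambda>v. v * S" "\<lambda>v. v * N + T" "{L<..}"] assms
    by (simp add: \<kappa>_def mult_ac add.assoc)
  also have "\<dots> = (\<integral>v. indicator {L<..} v * ?e v - indicator {L<..} v * ?e v * \<kappa> v \<partial>lborel)"
    by (simp add: right_diff_distrib)
  also have "\<dots> = (\<integral>v. indicator {L<..} v * ?e v \<partial>lborel) - (\<integral>v. indicator {L<..} v * ?e v * \<kappa> v \<partial>lborel)"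
    using e_int e\<kappa>_int by (intro Bochner_Integration.integral_diff) (simp_all add: has_bochner_integral_iff)
  finally show ?thesis
    using e_int e\<kappa> by (simp add: has_bochner_integral_iff)
qed

lemma (in prob_space) prob_outage_exponential:
  fixes Q V W :: "'a \<Rightarrow> real"
  assumes indep: "indep_vars (\<lambda>_. borel) (\<lambda>i::nat. [Q, V, W] ! i) {0, 1, 2}"
    and Q: "distributed M lborel Q (exponential_density lq)"
    and V: "distributed M lborel V (exponential_density lv)"
    and W: "distributed M lborel W (exponential_density lw)"
    and lq: "0 < lq" and lv: "0 < lv" and lw: "0 < lw"
    and S\<^sub>\<Theta>: "0 < S\<^sub>\<Theta>" and N\<^sub>\<Theta>: "0 \<le> N\<^sub>\<Theta>" and S\<^sub>\<Phi>: "0 < S\<^sub>\<Phi>" and N\<^sub>\<Phi>: "0 \<le> N\<^sub>\<Phi>"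
    and T: "0 \<le> T" and L: "0 < L"
  shows "prob {\<omega> \<in> space M. Q \<omega> < W \<omega> * S\<^sub>\<Theta> + N\<^sub>\<Theta> + T \<and> V \<omega> < L}
         + prob {\<omega> \<in> space M. Q \<omega> < W \<omega> * V \<omega> * S\<^sub>\<Phi> + V \<omega> * N\<^sub>\<Phi> + T \<and> V \<omega> > L}
       = 1 - lw * exp (- lq * (N\<^sub>\<Theta> + T)) / (lw + lq * S\<^sub>\<Theta>) * (1 - exp (- lv * L))
         + lv * lw * Ei (- (lw + lq * L * S\<^sub>\<Phi>) * (N\<^sub>\<Phi> / S\<^sub>\<Phi> + lv / (lq * S\<^sub>\<Phi>))) / (lq * S\<^sub>\<Phi>)
           * exp (- L * (lv + lq * N\<^sub>\<Phi>) - lq * T + (lw + lq * L * S\<^sub>\<Phi>) * (N\<^sub>\<Phi> / S\<^sub>\<Phi> + lv / (lq * S\<^sub>\<Phi>)))"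
proof -
  have Ei_arg: "- (lw + lq * L * S\<^sub>\<Phi>) * (N\<^sub>\<Phi> / S\<^sub>\<Phi> + lv / (lq * S\<^sub>\<Phi>))
      = - ((lv + lq * N\<^sub>\<Phi>) * (L + lw / (lq * S\<^sub>\<Phi>)))"
    using lq S\<^sub>\<Phi> by (simp add: field_simps)
  have exp_arg: "- L * (lv + lq * N\<^sub>\<Phi>) - lq * T + (lw + lq * L * S\<^sub>\<Phi>) * (N\<^sub>\<Phi> / S\<^sub>\<Phi> + lv / (lq * S\<^sub>\<Phi>))
      = (lv + lq * N\<^sub>\<Phi>) * lw / (lq * S\<^sub>\<Phi>) - lq * T"
    using lq S\<^sub>\<Phi> by (simp add: field_simps)
  show ?thesis
    unfolding prob_exponential_less_below[OF indep Q V W lq lv lw less_imp_le[OF S\<^sub>\<Theta>] N\<^sub>\<Theta> T less_imp_le[OF L]]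
      prob_exponential_less_above[OF indep Q V W lq lv lw S\<^sub>\<Phi> N\<^sub>\<Phi> T less_imp_le[OF L]]
      Ei_arg exp_arg
    by (simp add: algebra_simps)
qed

theorem proposition2:
  fixes M :: "'a measure" and Q V W :: "'a \<Rightarrow> real"
    and lq lv lw \<beta> J G D PT dRb dRD \<tau> \<sigma>2 PR I \<psi> :: real
  assumes "prob_space M"
    and "prob_space.indep_vars M (\<lambda>_. borel) (\<lambda>i::nat. [Q, V, W] ! i) {0, 1, 2}"
    and "distributed M lborel Q (exponential_density lq)"
    and "distributed M lborel V (exponential_density lv)"
    and "distributed M lborel W (exponential_density lw)"
    and "lq > 0" "lv > 0" "lw > 0"
    and "\<beta> > 0" "J \<ge> 0" "G \<ge> 0" "D > 0" "PT > 0" "dRb > 0" "dRD > 0" "\<tau> > 0"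
    and "\<sigma>2 > 0" "PR > 0" "I > 0" "\<psi> > 0" "\<beta> - J * \<psi> > 0"
  shows "let S = (\<lambda>l. D * PT * \<psi> / (l * (\<beta> - J * \<psi>)));
             Oc = (\<lambda>l. dRb powr \<tau> * \<sigma>2 * \<psi> / (l * (\<beta> - J * \<psi>)));
             S\<Theta> = S PR; O\<Theta> = Oc PR;
             S\<Phi> = S (I * dRD powr \<tau>); O\<Phi> = Oc (I * dRD powr \<tau>);
             T = G * \<psi> / (\<beta> - J * \<psi>);
             \<Lambda> = I * dRD powr \<tau> / PR;
             \<mu> = lw + lq * \<Lambda> * S\<Phi>;
             \<xi> = O\<Phi> / S\<Phi> + lv / (lq * S\<Phi>);
             F = measure M {\<omega> \<in> space M. Q \<omega> < W \<omega> * S\<Theta> + O\<Theta> + T \<and> V \<omega> < \<Lambda>}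
               + measure M {\<omega> \<in> space M. Q \<omega> < W \<omega> * V \<omega> * S\<Phi> + V \<omega> * O\<Phi> + T \<and> V \<omega> > \<Lambda>}
         in F = 1 - lw * exp (- lq * (O\<Theta> + T)) / (lw + lq * S\<Theta>) * (1 - exp (- lv * \<Lambda>))
                + lv * lw * Ei (- \<mu> * \<xi>) / (lq * S\<Phi>)
                  * exp (- \<Lambda> * (lv + lq * O\<Phi>) - lq * T + \<mu> * \<xi>)"
proof -
  interpret prob_space M by fact
  have "0 < dRb powr \<tau>" "0 < I * dRD powr \<tau>"
    using assms by simp_all
  then show ?thesis
    unfolding Let_def using assms
    by (intro prob_outage_exponential[OF assms(2-8)])
       (auto intro!: divide_pos_pos divide_nonneg_pos mult_pos_pos mult_nonneg_nonneg)
qed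

end
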